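(* Let $\mathcal{M}=\{\mathcal{M}_k\}$ be an $n$-qudit quantum instrument and let $\tilde\nu_{s,t}=\tilde\nu_{s,t}(\mathcal{M})$. Let $\hat{\mathcal{M}}=\{\hat{\mathcal{M}}_k\}$ be the randomly compiled instrument $$\hat{\mathcal{M}}_k=d^{-3n}\sum_{a,b,x\in\mathbb{Z}_d^n}\mathcal{X}^{x}\circ\mathcal{Z}^{a}\circ\mathcal{M}_{k-x}\circ\mathcal{Z}^{b}\circ\mathcal{X}^{-x}.$$ Then for every $k\in\mathbb{Z}_d^n$ and every operator $\rho$, $$\hat{\mathcal{M}}_k(\rho)=d^{-2n}\sum_{s,t\in\mathbb{Z}_d^n}\chi_k(s-t)\,\tilde\nu_{s,t}\,\operatorname{tr}\!\big((Z^s)^\dagger\rho\big)\,Z^t .$$ Equivalently, $$\hat{\mathcal{M}}_k(\rho)=\sum_{a,b\in\mathbb{Z}_d^n}\nu_{a,b}\,\langle k+a|\rho|k+a\rangle\,|k+b\rangle\langle k+b|,$$ where $$\nu_{a,b}=d^{-2n}\sum_{s,t\in\mathbb{Z}_d^n}\tilde\nu_{s,t}\,\chi_s(a)^*\chi_t(b).$$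
   Context: Let $d,n$ be positive integers. All arithmetic on $\mathbb{Z}_d^n$ is componentwise modulo $d$. For $z,j\in\mathbb{Z}_d^n$ let $\chi_z(j)=\exp(2\pi i\, z\cdot j/d)$. Let $\{|j\rangle: j\in\mathbb{Z}_d^n\}$ be the computational basis. Define $X^x=\sum_j |j+x\rangle\langle j|$ and $Z^z=\sum_j \chi_z(j)|j\rangle\langle j|$ for $x,z\in\mathbb{Z}_d^n$. For an operator $A$, $\mathcal{A}$ denotes the map $\rho\mapsto A\rho A^\dagger$. Maps are composed right to left and extended linearly to all operators. An $n$-qudit quantum instrument is a family $\{\mathcal{M}_k\}_{k\in\mathbb{Z}_d^n}$ of completely positive trace-non-increasing maps whose sum is trace preserving; outcome $k$ is reported with unnormalized post-measurement state $\mathcal{M}_k(\rho)$. The generalized Pauli fidelities are $$\tilde\nu_{s,t}(\mathcal{M})=d^{-n}\sum_{k}\chi_k(s-t)^*\operatorname{tr}\!\big((Z^t)^\dagger\mathcal{M}_k(Z^s)\big).$$ *)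

theory Defs
  imports Complex_Main
begin

text \<open>Z_d^n is modelled as functions 'n => int (with 'n a finite index type, n = card (UNIV :: 'n set))
  with all entries in {0..<d}. Operators on the n-qudit space are complex-valued functions
  of two basis labels; only entries indexed by Z_d^n are meaningful.\<close>

type_synonym 'n lbl = "'n \<Rightarrow> int"
type_synonym 'n op = "'n lbl \<Rightarrow> 'n lbl \<Rightarrow> complex"

definition Zdn :: "int \<Rightarrow> ('n::finite) lbl set" where
  "Zdn d = {j. \<forall>i. 0 \<le> j i \<and> j i < d}"

definition vadd :: "int \<Rightarrow> ('n::finite) lbl \<Rightarrow> 'n lbl \<Rightarrow> 'n lbl" where
  "vadd d x y = (\<lambda>i. (x i + y i) mod d)"

definition vsub :: "int \<Rightarrow> ('n::finite) lbl \<Rightarrow> 'n lbl \<Rightarrow> 'n lbl" where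
  "vsub d x y = (\<lambda>i. (x i - y i) mod d)"

definition vneg :: "int \<Rightarrow> ('n::finite) lbl \<Rightarrow> 'n lbl" where
  "vneg d x = (\<lambda>i. (- x i) mod d)"

definition chi :: "int \<Rightarrow> ('n::finite) lbl \<Rightarrow> 'n lbl \<Rightarrow> complex" where
  "chi d z j = cis (2 * pi * of_int (\<Sum>i\<in>UNIV. z i * j i) / of_int d)"

definition is_op :: "int \<Rightarrow> ('n::finite) op \<Rightarrow> bool" where
  "is_op d A \<longleftrightarrow> (\<forall>j l. (j \<notin> Zdn d \<or> l \<notin> Zdn d) \<longrightarrow> A j l = 0)"

definition mmul :: "int \<Rightarrow> ('n::finite) op \<Rightarrow> 'n op \<Rightarrow> 'n op" where
  "mmul d A B = (\<lambda>j l. \<Sum>m\<in>Zdn d. A j m * B m l)"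

definition adj :: "('n::finite) op \<Rightarrow> 'n op" where
  "adj A = (\<lambda>j l. cnj (A l j))"

definition tr :: "int \<Rightarrow> ('n::finite) op \<Rightarrow> complex" where
  "tr d A = (\<Sum>j\<in>Zdn d. A j j)"

definition conjm :: "int \<Rightarrow> ('n::finite) op \<Rightarrow> 'n op \<Rightarrow> 'n op" where
  "conjm d A \<rho> = mmul d (mmul d A \<rho>) (adj A)"

definition Xop :: "int \<Rightarrow> ('n::finite) lbl \<Rightarrow> 'n op" where
  "Xop d x = (\<lambda>j l. if j \<in> Zdn d \<and> l \<in> Zdn d \<and> j = vadd d l x then 1 else 0)"

definition Zop :: "int \<Rightarrow> ('n::finite) lbl \<Rightarrow> 'n op" where
  "Zop d z = (\<lambda>j l. if j \<in> Zdn d \<and> l = j then chi d z j else 0)"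

definition ketbra :: "int \<Rightarrow> ('n::finite) lbl \<Rightarrow> 'n lbl \<Rightarrow> 'n op" where
  "ketbra d a b = (\<lambda>j l. if j = a \<and> l = b \<and> a \<in> Zdn d \<and> b \<in> Zdn d then 1 else 0)"

definition psd_on :: "'i set \<Rightarrow> ('i \<Rightarrow> 'i \<Rightarrow> complex) \<Rightarrow> bool" where
  "psd_on S A \<longleftrightarrow> (\<forall>p q. (p \<notin> S \<or> q \<notin> S) \<longrightarrow> A p q = 0) \<and>
     (\<forall>v. (\<Sum>p\<in>S. \<Sum>q\<in>S. cnj (v p) * A p q * v q) \<in> \<real> \<and>
          0 \<le> Re (\<Sum>p\<in>S. \<Sum>q\<in>S. cnj (v p) * A p q * v q))"

definition linear_map :: "int \<Rightarrow> (('n::finite) op \<Rightarrow> 'n op) \<Rightarrow> bool" where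
  "linear_map d M \<longleftrightarrow>
     (\<forall>A. is_op d A \<longrightarrow> is_op d (M A)) \<and>
     (\<forall>A B c. is_op d A \<longrightarrow> is_op d B \<longrightarrow>
        M (\<lambda>j l. A j l + c * B j l) = (\<lambda>j l. M A j l + c * M B j l))"

text \<open>id_m \<otimes> M applied to a block operator on C^m \<otimes> (C^d)^{\<otimes>n}.\<close>
definition ampl :: "nat \<Rightarrow> (('n::finite) op \<Rightarrow> 'n op)
    \<Rightarrow> (nat \<times> 'n lbl \<Rightarrow> nat \<times> 'n lbl \<Rightarrow> complex) \<Rightarrow> (nat \<times> 'n lbl \<Rightarrow> nat \<times> 'n lbl \<Rightarrow> complex)" where
  "ampl m M X = (\<lambda>(a, j) (b, l). if a < m \<and> b < m then M (\<lambda>j' l'. X (a, j') (b, l')) j l else 0)"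

definition completely_positive :: "int \<Rightarrow> (('n::finite) op \<Rightarrow> 'n op) \<Rightarrow> bool" where
  "completely_positive d M \<longleftrightarrow> linear_map d M \<and>
     (\<forall>m X. psd_on ({..<m} \<times> Zdn d) X \<longrightarrow> psd_on ({..<m} \<times> Zdn d) (ampl m M X))"

definition trace_nonincreasing :: "int \<Rightarrow> (('n::finite) op \<Rightarrow> 'n op) \<Rightarrow> bool" where
  "trace_nonincreasing d M \<longleftrightarrow> (\<forall>\<rho>. psd_on (Zdn d) \<rho> \<longrightarrow> Re (tr d (M \<rho>)) \<le> Re (tr d \<rho>))"

definition quantum_instrument :: "int \<Rightarrow> (('n::finite) lbl \<Rightarrow> 'n op \<Rightarrow> 'n op) \<Rightarrow> bool" where
  "quantum_instrument d M \<longleftrightarrow>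
     (\<forall>k\<in>Zdn d. completely_positive d (M k) \<and> trace_nonincreasing d (M k)) \<and>
     (\<forall>\<rho>. is_op d \<rho> \<longrightarrow> tr d (\<lambda>j l. \<Sum>k\<in>Zdn d. M k \<rho> j l) = tr d \<rho>)"

definition nu_tilde :: "int \<Rightarrow> (('n::finite) lbl \<Rightarrow> 'n op \<Rightarrow> 'n op) \<Rightarrow> 'n lbl \<Rightarrow> 'n lbl \<Rightarrow> complex" where
  "nu_tilde d M s t = (1 / of_int d ^ card (UNIV :: 'n set)) *
     (\<Sum>k\<in>Zdn d. cnj (chi d k (vsub d s t)) * tr d (mmul d (adj (Zop d t)) (M k (Zop d s))))"

definition compiled :: "int \<Rightarrow> (('n::finite) lbl \<Rightarrow> 'n op \<Rightarrow> 'n op) \<Rightarrow> 'n lbl \<Rightarrow> 'n op \<Rightarrow> 'n op" where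
  "compiled d M k \<rho> = (\<lambda>j l. (1 / of_int d ^ (3 * card (UNIV :: 'n set))) *
     (\<Sum>a\<in>Zdn d. \<Sum>b\<in>Zdn d. \<Sum>x\<in>Zdn d.
        conjm d (Xop d x) (conjm d (Zop d a)
          (M (vsub d k x) (conjm d (Zop d b) (conjm d (Xop d (vneg d x)) \<rho>)))) j l))"

definition nu :: "int \<Rightarrow> (('n::finite) lbl \<Rightarrow> 'n op \<Rightarrow> 'n op) \<Rightarrow> 'n lbl \<Rightarrow> 'n lbl \<Rightarrow> complex" where
  "nu d M a b = (1 / of_int d ^ (2 * card (UNIV :: 'n set))) *
     (\<Sum>s\<in>Zdn d. \<Sum>t\<in>Zdn d. nu_tilde d M s t * cnj (chi d s a) * chi d t b)"

end

theory Submission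
  imports Defs "HOL-Library.FuncSet" "HOL-Library.Real_Mod"
begin

text \<open>Conjugating the instrument by random Z-operators on both sides (the sums over a and b)
  removes, by orthogonality of the characters, every off-diagonal entry of input and output.
  The X-sum, paired with the shifted outcome label k - x, then averages over outcomes, so the
  compiled instrument only depends on the outcome-averaged transition matrix
  A(a,b) = d^-n \<Sum>_k <k+b| M_k(|k+a><k+a|) |k+b>. The Pauli fidelities are the Fourier
  transform of A; hence nu, their inverse transform, is A itself, and both right-hand sides
  reduce to the same expression in A.\<close>

lemma sum_swap_pairs:
  "(\<Sum>s\<in>A. \<Sum>t\<in>B. \<Sum>a\<in>C. \<Sum>b\<in>E. F s t a b) = (\<Sum>a\<in>C. \<Sum>b\<in>E. \<Sum>s\<in>A. \<Sum>t\<in>B. F s t a b)"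
proof -
  have "(\<Sum>s\<in>A. \<Sum>t\<in>B. \<Sum>a\<in>C. \<Sum>b\<in>E. F s t a b) = (\<Sum>s\<in>A. \<Sum>a\<in>C. \<Sum>b\<in>E. \<Sum>t\<in>B. F s t a b)"
    by (rule sum.cong[OF refl]) (rule trans[OF sum.swap sum.cong[OF refl sum.swap]])
  also have "\<dots> = (\<Sum>a\<in>C. \<Sum>b\<in>E. \<Sum>s\<in>A. \<Sum>t\<in>B. F s t a b)"
    by (rule trans[OF sum.swap sum.cong[OF refl sum.swap]])
  finally show ?thesis .
qed

lemma sum_sum_exchange:
  "(\<Sum>s\<in>A. \<Sum>t\<in>B. f s * g t * (\<Sum>a\<in>C. \<Sum>b\<in>E. u s a * v t b * Q a b)) =
   (\<Sum>a\<in>C. \<Sum>b\<in>E. Q a b * (\<Sum>s\<in>A. f s * u s a) * (\<Sum>t\<in>B. g t * v t b :: 'a::comm_semiring_0))"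
proof -
  have "(\<Sum>s\<in>A. \<Sum>t\<in>B. \<Sum>a\<in>C. \<Sum>b\<in>E. Q a b * (f s * u s a) * (g t * v t b))
     = (\<Sum>a\<in>C. \<Sum>b\<in>E. \<Sum>s\<in>A. \<Sum>t\<in>B. Q a b * (f s * u s a) * (g t * v t b))"
    by (rule sum_swap_pairs)
  then show ?thesis
    by (simp add: sum_distrib_left sum_distrib_right mult_ac)
qed

lemma Zdn_eq_PiE: "Zdn d = PiE UNIV (\<lambda>_. {0..<d})"
  by (auto simp: Zdn_def PiE_def Pi_def extensional_def)

lemma finite_Zdn [simp]: "finite (Zdn d)"
  unfolding Zdn_eq_PiE by (intro finite_PiE) auto

lemma of_nat_card_Zdn:
  "d \<ge> 0 \<Longrightarrow> (of_nat (card (Zdn d :: ('n::finite) lbl set)) :: complex) = of_int d ^ card (UNIV :: 'n set)"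
  unfolding Zdn_eq_PiE by (simp add: card_PiE)

lemma Zdn_mod: "m \<in> Zdn d \<Longrightarrow> m i mod d = m i"
  by (simp add: Zdn_def)

lemma vadd_Zdn [simp]: "d \<ge> 1 \<Longrightarrow> vadd d x y \<in> Zdn d"
  by (simp add: Zdn_def vadd_def)

lemma vsub_Zdn [simp]: "d \<ge> 1 \<Longrightarrow> vsub d x y \<in> Zdn d"
  by (simp add: Zdn_def vsub_def)

lemma vadd_commute: "vadd d x y = vadd d y x"
  by (simp add: vadd_def add.commute)

lemma vsub_vadd_cancel: "m \<in> Zdn d \<Longrightarrow> vsub d (vadd d m c) c = m"
  by (rule ext) (simp add: vadd_def vsub_def mod_simps Zdn_mod)

lemma vadd_vsub_cancel: "m \<in> Zdn d \<Longrightarrow> vadd d (vsub d m c) c = m"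
  by (rule ext) (simp add: vadd_def vsub_def mod_simps Zdn_mod)

lemma vsub_vneg: "vsub d m (vneg d x) = vadd d m x"
  by (rule ext) (simp add: vsub_def vneg_def vadd_def mod_simps)

lemma vadd_eq_iff_vsub_eq:
  "d \<ge> 1 \<Longrightarrow> j \<in> Zdn d \<Longrightarrow> p \<in> Zdn d \<Longrightarrow> j = vadd d p x \<longleftrightarrow> p = vsub d j x"
  using vadd_vsub_cancel vsub_vadd_cancel by metis

lemma vsub_right_inject:
  "d \<ge> 1 \<Longrightarrow> j \<in> Zdn d \<Longrightarrow> l \<in> Zdn d \<Longrightarrow> vsub d j x = vsub d l x \<longleftrightarrow> j = l"
  by (metis vadd_vsub_cancel)

lemma Zdn_eq_iff_dvd:
  assumes "j \<in> Zdn d" "l \<in> Zdn d"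
  shows "(\<forall>i. d dvd (j i - l i)) \<longleftrightarrow> j = l"
proof
  assume "\<forall>i. d dvd (j i - l i)"
  then have "\<And>i. j i mod d = l i mod d"
    by (simp add: mod_eq_dvd_iff)
  then show "j = l"
    using assms by (auto simp: Zdn_mod)
qed simp

lemma bij_betw_vadd: "d \<ge> 1 \<Longrightarrow> bij_betw (vadd d c) (Zdn d) (Zdn d)"
  by (rule bij_betwI[where g="\<lambda>s. vsub d s c"]) (auto simp: vadd_commute[of d c] vsub_vadd_cancel vadd_vsub_cancel)

lemma sum_Zdn_shift: "d \<ge> 1 \<Longrightarrow> (\<Sum>s\<in>Zdn d. f (vadd d c s)) = (\<Sum>s\<in>Zdn d. f s)"
  using sum.reindex_bij_betw[OF bij_betw_vadd] by blast

lemma sum_Zdn_reflect: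
  assumes "d \<ge> 1"
  shows "(\<Sum>x\<in>Zdn d. f (vsub d k x)) = (\<Sum>x\<in>Zdn d. f x)"
proof -
  have "x \<in> Zdn d \<Longrightarrow> vsub d k (vsub d k x) = x" for x
    by (rule ext) (simp add: vsub_def mod_simps Zdn_mod)
  then have "bij_betw (vsub d k) (Zdn d) (Zdn d)"
    using assms by (intro bij_betwI[where g="vsub d k"]) auto
  then show ?thesis
    using sum.reindex_bij_betw by blast
qed

subsection \<open>Characters of Z_d^n\<close>

definition ldot :: "('n::finite) lbl \<Rightarrow> 'n lbl \<Rightarrow> int" where
  "ldot z j = (\<Sum>i\<in>UNIV. z i * j i)"

definition omega_pow :: "int \<Rightarrow> int \<Rightarrow> complex" where
  "omega_pow d x = cis (2 * pi * of_int x / of_int d)"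

lemma chi_eq_omega_pow: "chi d z j = omega_pow d (ldot z j)"
  by (simp add: chi_def omega_pow_def ldot_def)

lemma omega_pow_add: "omega_pow d (x + y) = omega_pow d x * omega_pow d y"
  by (simp add: omega_pow_def cis_mult add_divide_distrib distrib_left)

lemma omega_pow_diff: "omega_pow d (x - y) = omega_pow d x * cnj (omega_pow d y)"
  by (simp add: omega_pow_def cis_mult cis_cnj diff_divide_distrib right_diff_distrib)

lemma omega_pow_0 [simp]: "omega_pow d 0 = 1"
  by (simp add: omega_pow_def)

lemma omega_pow_cong:
  assumes "d dvd (x - y)"
  shows "omega_pow d x = omega_pow d y"
proof (cases "d = 0")
  case False
  obtain q where q: "x = y + d * q"
    using assms by (metis add.commute diff_add_cancel dvdE)
  have "2 * pi * of_int x / of_int d = 2 * pi * of_int y / of_int d + 2 * pi * of_int q"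
    using False by (simp add: q field_simps)
  then show ?thesis
    by (simp add: omega_pow_def cis_mult[symmetric])
qed (use assms in simp)

lemma dvd_if_omega_pow_eq_1:
  assumes "d \<noteq> 0" "omega_pow d x = 1"
  shows "d dvd x"
proof -
  obtain n where "2 * pi * of_int x / of_int d = of_int n * (2 * pi)"
    using assms(2) cis_eq_1_iff unfolding omega_pow_def by blast
  then have "real_of_int x = of_int n * of_int d"
    using assms(1) by (simp add: field_simps)
  then have "x = n * d"
    by (metis of_int_eq_iff of_int_mult)
  then show ?thesis by simp
qed

lemma ldot_commute: "ldot z j = ldot j z"
  by (simp add: ldot_def mult.commute)

lemma ldot_cong:
  assumes "\<And>i. d dvd (a i - b i)"
  shows "d dvd (ldot z a - ldot z b)"
proof -
  have "ldot z a - ldot z b = (\<Sum>i\<in>UNIV. z i * (a i - b i))"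
    by (simp add: ldot_def sum_subtractf right_diff_distrib)
  then show ?thesis
    using assms by (simp add: dvd_sum)
qed

lemma chi_commute: "chi d z j = chi d j z"
  by (simp add: chi_eq_omega_pow ldot_commute)

lemma chi_mult_cnj_self: "chi d z j * cnj (chi d z j) = 1"
  by (simp add: chi_def cis_cnj cis_mult)

lemma chi_vadd: "chi d z (vadd d x y) = chi d z x * chi d z y"
proof -
  have "d dvd (ldot z (vadd d x y) - ldot z (\<lambda>i. x i + y i))"
    by (intro ldot_cong) (simp add: vadd_def mod_eq_dvd_iff[symmetric] mod_simps)
  then have "omega_pow d (ldot z (vadd d x y)) = omega_pow d (ldot z (\<lambda>i. x i + y i))"
    by (rule omega_pow_cong)
  also have "ldot z (\<lambda>i. x i + y i) = ldot z x + ldot z y"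
    by (simp add: ldot_def distrib_left sum.distrib)
  finally show ?thesis
    by (simp add: chi_eq_omega_pow omega_pow_add)
qed

lemma chi_vsub: "chi d z (vsub d x y) = chi d z x * cnj (chi d z y)"
proof -
  have "d dvd (ldot z (vsub d x y) - ldot z (\<lambda>i. x i - y i))"
    by (intro ldot_cong) (simp add: vsub_def mod_eq_dvd_iff[symmetric] mod_simps)
  then have "omega_pow d (ldot z (vsub d x y)) = omega_pow d (ldot z (\<lambda>i. x i - y i))"
    by (rule omega_pow_cong)
  also have "ldot z (\<lambda>i. x i - y i) = ldot z x - ldot z y"
    by (simp add: ldot_def right_diff_distrib sum_subtractf)
  finally show ?thesis
    by (simp add: chi_eq_omega_pow omega_pow_diff)
qed

lemma sum_omega_pow_ldot:
  fixes w :: "('n::finite) lbl"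
  assumes d: "d \<ge> 1"
  shows "(\<Sum>s\<in>Zdn d. omega_pow d (ldot s w)) = (if \<forall>i. d dvd w i then of_int d ^ card (UNIV :: 'n set) else 0)"
proof (cases "\<forall>i. d dvd w i")
  case True
  have "omega_pow d (ldot s w) = 1" for s
  proof -
    have "d dvd (ldot s w - ldot s (\<lambda>_. 0))"
      using True by (intro ldot_cong) simp
    then show ?thesis
      using omega_pow_cong[of d "ldot s w" 0] by (simp add: ldot_def)
  qed
  then show ?thesis
    using True of_nat_card_Zdn[of d, where 'n='n] d by simp
next
  case False
  then obtain i0 where i0: "\<not> d dvd w i0" by blast
  define \<delta> :: "'n lbl" where "\<delta> = (\<lambda>i. if i = i0 then 1 else 0)"
  have shift: "omega_pow d (ldot (vadd d \<delta> s) w) = omega_pow d (w i0) * omega_pow d (ldot s w)" for s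
  proof -
    have "d dvd (ldot w (vadd d \<delta> s) - ldot w (\<lambda>i. \<delta> i + s i))"
      by (intro ldot_cong) (simp add: vadd_def mod_eq_dvd_iff[symmetric] mod_simps)
    then have "omega_pow d (ldot (vadd d \<delta> s) w) = omega_pow d (ldot w (\<lambda>i. \<delta> i + s i))"
      using omega_pow_cong ldot_commute by metis
    moreover have "ldot w (\<lambda>i. \<delta> i + s i) = (\<Sum>i\<in>UNIV. w i * \<delta> i) + ldot s w"
      by (simp add: ldot_def distrib_left sum.distrib mult.commute)
    moreover have "(\<Sum>i\<in>UNIV. w i * \<delta> i) = w i0"
      by (simp add: \<delta>_def if_distrib[of "\<lambda>x. _ * x"] cong: if_cong)
    ultimately show ?thesis
      by (simp add: omega_pow_add)
  qed
  let ?S = "\<Sum>s\<in>Zdn d. omega_pow d (ldot s w)"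
  have "?S = (\<Sum>s\<in>Zdn d. omega_pow d (ldot (vadd d \<delta> s) w))"
    using sum_Zdn_shift[OF d, of "\<lambda>s. omega_pow d (ldot s w)" \<delta>] by simp
  also have "\<dots> = omega_pow d (w i0) * ?S"
    by (simp add: shift sum_distrib_left)
  finally have "(1 - omega_pow d (w i0)) * ?S = 0"
    by (simp add: algebra_simps)
  moreover have "omega_pow d (w i0) \<noteq> 1"
    using dvd_if_omega_pow_eq_1 d i0 by force
  ultimately have "?S = 0" by simp
  then show ?thesis
    by (simp only: if_not_P[OF False])
qed

lemma sum_chi_mult_cnj:
  fixes p q :: "('n::finite) lbl"
  assumes d: "d \<ge> 1" and "p \<in> Zdn d" "q \<in> Zdn d"
  shows "(\<Sum>a\<in>Zdn d. chi d a p * cnj (chi d a q)) = (if p = q then of_int d ^ card (UNIV :: 'n set) else 0)"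
proof -
  have "chi d a p * cnj (chi d a q) = omega_pow d (ldot a (\<lambda>i. p i - q i))" for a
    by (simp add: chi_eq_omega_pow omega_pow_diff[symmetric] ldot_def right_diff_distrib sum_subtractf)
  then show ?thesis
    by (simp only: sum_omega_pow_ldot[OF d] Zdn_eq_iff_dvd[OF assms(2,3)])
qed

lemma linear_map_zero:
  assumes "linear_map d N"
  shows "N (\<lambda>j l. 0) = (\<lambda>j l. 0)"
proof -
  have "is_op d (\<lambda>j l. 0)" by (simp add: is_op_def)
  then have "N (\<lambda>j l. 0 + 1 * 0) = (\<lambda>j l. N (\<lambda>j l. 0) j l + 1 * N (\<lambda>j l. 0) j l)"
    using assms unfolding linear_map_def by blast
  then show ?thesis by (simp add: fun_eq_iff)
qed

lemma linear_map_sum: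
  assumes lin: "linear_map d N" and "finite S" and "\<forall>m\<in>S. is_op d (A m)"
  shows "N (\<lambda>j l. \<Sum>m\<in>S. c m * A m j l) = (\<lambda>j l. \<Sum>m\<in>S. c m * N (A m) j l)"
  using assms(2,3)
proof (induction S rule: finite_induct)
  case empty
  then show ?case using linear_map_zero[OF lin] by simp
next
  case (insert x F)
  have "is_op d (\<lambda>j l. \<Sum>m\<in>F. c m * A m j l)"
    using insert by (simp add: is_op_def)
  moreover have "is_op d (A x)" using insert by simp
  ultimately have "N (\<lambda>j l. (\<Sum>m\<in>F. c m * A m j l) + c x * A x j l)
      = (\<lambda>j l. N (\<lambda>j l. \<Sum>m\<in>F. c m * A m j l) j l + c x * N (A x) j l)"
    using lin unfolding linear_map_def by blast
  with insert show ?case by (simp add: add.commute)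
qed

lemma linear_map_instrument: "quantum_instrument d M \<Longrightarrow> k \<in> Zdn d \<Longrightarrow> linear_map d (M k)"
  by (simp add: quantum_instrument_def completely_positive_def)

lemma is_op_ketbra: "is_op d (ketbra d m m)"
  by (simp add: ketbra_def is_op_def)

lemma sum_ketbra_vadd:
  assumes d: "d \<ge> 1"
  shows "(\<Sum>b\<in>Zdn d. c b * ketbra d (vadd d k b) (vadd d k b) j l) =
    (if j \<in> Zdn d \<and> j = l then c (vsub d j k) else 0)"
proof -
  have "b \<in> Zdn d \<Longrightarrow> j \<in> Zdn d \<Longrightarrow> j = vadd d k b \<longleftrightarrow> b = vsub d j k" for b
    using vadd_eq_iff_vsub_eq[OF d] vadd_commute by metis
  then show ?thesis
    using d by (auto simp: ketbra_def if_distrib[of "\<lambda>x. _ * x"] sum.delta cong: if_cong conj_cong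
        intro!: sum.neutral)
qed

lemma Zop_eq_sum_ketbra: "Zop d s = (\<lambda>j l. \<Sum>m\<in>Zdn d. chi d s m * ketbra d m m j l)"
  by (intro ext) (auto simp: Zop_def ketbra_def if_distrib[of "\<lambda>x. _ * x"] sum.delta
      cong: if_cong intro!: sum.neutral)

lemma tr_adj_Zop_mmul: "tr d (mmul d (adj (Zop d t)) Y) = (\<Sum>b\<in>Zdn d. cnj (chi d t b) * Y b b)"
  unfolding tr_def mmul_def adj_def Zop_def
  by (simp add: if_distrib[of cnj] if_distrib[of "\<lambda>x. x * _"] sum.delta cong: if_cong)

lemma conjm_Xop:
  assumes d: "d \<ge> 1"
  shows "conjm d (Xop d x) \<sigma> =
    (\<lambda>j l. if j \<in> Zdn d \<and> l \<in> Zdn d then \<sigma> (vsub d j x) (vsub d l x) else 0)"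
proof -
  have left: "mmul d (Xop d x) \<sigma> = (\<lambda>j m. if j \<in> Zdn d then \<sigma> (vsub d j x) m else 0)"
    unfolding mmul_def Xop_def
    by (intro ext) (auto simp: if_distrib[of "\<lambda>x. x * _"] vadd_eq_iff_vsub_eq[OF d]
        sum.delta d cong: if_cong conj_cong)
  show ?thesis
    unfolding conjm_def left unfolding mmul_def adj_def Xop_def
    by (intro ext) (auto simp: if_distrib[of cnj] if_distrib[of "\<lambda>x. _ * x"]
        vadd_eq_iff_vsub_eq[OF d] sum.delta d cong: if_cong conj_cong)
qed

lemma conjm_Zop:
  "conjm d (Zop d a) \<sigma> =
    (\<lambda>j l. if j \<in> Zdn d \<and> l \<in> Zdn d then chi d a j * \<sigma> j l * cnj (chi d a l) else 0)"
proof -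
  have left: "mmul d (Zop d a) \<sigma> = (\<lambda>j m. if j \<in> Zdn d then chi d a j * \<sigma> j m else 0)"
    unfolding mmul_def Zop_def
    by (intro ext) (simp add: if_distrib[of "\<lambda>x. x * _"] sum.delta cong: if_cong)
  show ?thesis
    unfolding conjm_def left unfolding mmul_def adj_def Zop_def
    by (intro ext) (simp add: if_distrib[of cnj] if_distrib[of "\<lambda>x. _ * x"]
        if_distrib[of "\<lambda>x. x * _"] sum.delta cong: if_cong)
qed

lemma conjm_Zop_apply:
  "p \<in> Zdn d \<Longrightarrow> q \<in> Zdn d \<Longrightarrow> conjm d (Zop d a) Y p q = chi d a p * Y p q * cnj (chi d a q)"
  by (simp add: conjm_Zop)

subsection \<open>Twirling by Z-operators\<close>

lemma sum_conjm_Zop: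
  fixes \<tau> :: "('n::finite) op"
  assumes d: "d \<ge> 1"
  shows "(\<lambda>j l. \<Sum>b\<in>Zdn d. conjm d (Zop d b) \<tau> j l) =
    (\<lambda>j l. \<Sum>m\<in>Zdn d. (of_int d ^ card (UNIV :: 'n set) * \<tau> m m) * ketbra d m m j l)"
proof (intro ext)
  fix j l :: "'n lbl"
  show "(\<Sum>b\<in>Zdn d. conjm d (Zop d b) \<tau> j l) =
    (\<Sum>m\<in>Zdn d. (of_int d ^ card (UNIV :: 'n set) * \<tau> m m) * ketbra d m m j l)"
  proof (cases "j \<in> Zdn d \<and> l \<in> Zdn d")
    case True
    then have "(\<Sum>b\<in>Zdn d. conjm d (Zop d b) \<tau> j l) = \<tau> j l * (\<Sum>b\<in>Zdn d. chi d b j * cnj (chi d b l))"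
      by (simp add: conjm_Zop sum_distrib_left mult_ac)
    also have "\<dots> = (if j = l then of_int d ^ card (UNIV :: 'n set) * \<tau> j j else 0)"
      using True by (simp add: sum_chi_mult_cnj[OF d])
    finally show ?thesis
      using True by (cases "j = l")
        (auto simp: ketbra_def if_distrib[of "\<lambda>x. _ * x"] sum.delta cong: if_cong intro!: sum.neutral)
  next
    case False
    then show ?thesis by (auto simp: conjm_Zop ketbra_def intro!: sum.neutral)
  qed
qed

lemma Z_twirl:
  fixes \<tau> :: "('n::finite) op"
  assumes d: "d \<ge> 1" and lin: "linear_map d N"
  shows "(\<Sum>a\<in>Zdn d. \<Sum>b\<in>Zdn d. conjm d (Zop d a) (N (conjm d (Zop d b) \<tau>)) p q) =
    (if p \<in> Zdn d \<and> p = q then of_int d ^ card (UNIV :: 'n set) * of_int d ^ card (UNIV :: 'n set) *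
       (\<Sum>m\<in>Zdn d. \<tau> m m * N (ketbra d m m) p p) else 0)"
proof (cases "p \<in> Zdn d \<and> q \<in> Zdn d")
  case True
  let ?D = "of_int d ^ card (UNIV :: 'n set) :: complex"
  have ops: "\<forall>b\<in>Zdn d. is_op d (conjm d (Zop d b) \<tau>)"
    by (simp add: conjm_Zop is_op_def)
  have "(\<Sum>b\<in>Zdn d. N (conjm d (Zop d b) \<tau>) p q)
      = N (\<lambda>j l. \<Sum>b\<in>Zdn d. conjm d (Zop d b) \<tau> j l) p q"
    using linear_map_sum[OF lin finite_Zdn ops, where c="\<lambda>_. 1"] by simp
  also have "\<dots> = (\<Sum>m\<in>Zdn d. (?D * \<tau> m m) * N (ketbra d m m) p q)"
    unfolding sum_conjm_Zop[OF d] by (simp add: linear_map_sum[OF lin] is_op_ketbra)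
  finally have inner: "(\<Sum>b\<in>Zdn d. N (conjm d (Zop d b) \<tau>) p q)
      = ?D * (\<Sum>m\<in>Zdn d. \<tau> m m * N (ketbra d m m) p q)"
    by (simp add: sum_distrib_left mult_ac)
  have "(\<Sum>a\<in>Zdn d. \<Sum>b\<in>Zdn d. conjm d (Zop d a) (N (conjm d (Zop d b) \<tau>)) p q)
      = (\<Sum>a\<in>Zdn d. chi d a p * cnj (chi d a q)) * (\<Sum>b\<in>Zdn d. N (conjm d (Zop d b) \<tau>) p q)"
    using True by (simp add: conjm_Zop_apply sum_distrib_left sum_distrib_right mult_ac)
  then show ?thesis
    using True by (simp add: sum_chi_mult_cnj[OF d] inner)
next
  case False
  then show ?thesis by (auto simp: conjm_Zop intro!: sum.neutral)
qed

lemma Xop_Z_twirl: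
  fixes \<rho> :: "('n::finite) op"
  assumes d: "d \<ge> 1" and lin: "linear_map d N"
  shows "(\<Sum>a\<in>Zdn d. \<Sum>b\<in>Zdn d. conjm d (Xop d x) (conjm d (Zop d a)
            (N (conjm d (Zop d b) (conjm d (Xop d (vneg d x)) \<rho>)))) j l) =
    (if j \<in> Zdn d \<and> j = l then of_int d ^ card (UNIV :: 'n set) * of_int d ^ card (UNIV :: 'n set) *
       (\<Sum>m\<in>Zdn d. \<rho> (vadd d m x) (vadd d m x) * N (ketbra d m m) (vsub d j x) (vsub d j x)) else 0)"
  by (cases "j \<in> Zdn d \<and> l \<in> Zdn d")
    (auto simp: conjm_Xop[OF d] Z_twirl[OF d lin] vsub_right_inject[OF d] vsub_vneg d)

lemma compiled_apply:
  fixes M :: "('n::finite) lbl \<Rightarrow> 'n op \<Rightarrow> 'n op"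
  assumes d: "d \<ge> 1" and M: "quantum_instrument d M"
  shows "compiled d M k \<rho> j l = (if j \<in> Zdn d \<and> j = l then
     (1 / of_int d ^ card (UNIV :: 'n set)) * (\<Sum>x\<in>Zdn d. \<Sum>m\<in>Zdn d.
        \<rho> (vadd d m x) (vadd d m x) * M (vsub d k x) (ketbra d m m) (vsub d j x) (vsub d j x)) else 0)"
proof -
  let ?D = "of_int d ^ card (UNIV :: 'n set) :: complex"
  let ?F = "\<lambda>a b x. conjm d (Xop d x) (conjm d (Zop d a)
    (M (vsub d k x) (conjm d (Zop d b) (conjm d (Xop d (vneg d x)) \<rho>)))) j l"
  let ?T = "\<lambda>x. \<Sum>m\<in>Zdn d. \<rho> (vadd d m x) (vadd d m x) * M (vsub d k x) (ketbra d m m) (vsub d j x) (vsub d j x)"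
  have "compiled d M k \<rho> j l = (1 / ?D ^ 3) * (\<Sum>a\<in>Zdn d. \<Sum>b\<in>Zdn d. \<Sum>x\<in>Zdn d. ?F a b x)"
    by (simp add: compiled_def power_mult[symmetric] mult.commute)
  also have "(\<Sum>a\<in>Zdn d. \<Sum>b\<in>Zdn d. \<Sum>x\<in>Zdn d. ?F a b x) = (\<Sum>x\<in>Zdn d. \<Sum>a\<in>Zdn d. \<Sum>b\<in>Zdn d. ?F a b x)"
    by (rule trans[OF sum.cong[OF refl sum.swap] sum.swap])
  also have "\<dots> = (\<Sum>x\<in>Zdn d. if j \<in> Zdn d \<and> j = l then ?D * ?D * ?T x else 0)"
    using Xop_Z_twirl[OF d linear_map_instrument[OF M vsub_Zdn[OF d]]] by simp
  also have "\<dots> = (if j \<in> Zdn d \<and> j = l then ?D * ?D * (\<Sum>x\<in>Zdn d. ?T x) else 0)"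
    by (auto simp: sum_distrib_left)
  finally show ?thesis
    using d by (auto simp: power3_eq_cube)
qed

subsection \<open>The outcome-averaged transition matrix\<close>

definition avg_transition :: "int \<Rightarrow> (('n::finite) lbl \<Rightarrow> 'n op \<Rightarrow> 'n op) \<Rightarrow> 'n lbl \<Rightarrow> 'n lbl \<Rightarrow> complex" where
  "avg_transition d M a b = (1 / of_int d ^ card (UNIV :: 'n set)) *
     (\<Sum>k\<in>Zdn d. M k (ketbra d (vadd d k a) (vadd d k a)) (vadd d k b) (vadd d k b))"

lemma compiled_diag_eq_avg_transition:
  fixes M :: "('n::finite) lbl \<Rightarrow> 'n op \<Rightarrow> 'n op"
  assumes d: "d \<ge> 1"
  shows "(1 / of_int d ^ card (UNIV :: 'n set)) * (\<Sum>x\<in>Zdn d. \<Sum>m\<in>Zdn d.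
        \<rho> (vadd d m x) (vadd d m x) * M (vsub d k x) (ketbra d m m) (vsub d j x) (vsub d j x))
     = (\<Sum>a\<in>Zdn d. avg_transition d M a (vsub d j k) * \<rho> (vadd d k a) (vadd d k a))"
proof -
  let ?F = "\<lambda>k' a. \<rho> (vadd d k a) (vadd d k a) *
    M k' (ketbra d (vadd d k' a) (vadd d k' a)) (vadd d k' (vsub d j k)) (vadd d k' (vsub d j k))"
  have "(\<Sum>m\<in>Zdn d. \<rho> (vadd d m x) (vadd d m x) * M (vsub d k x) (ketbra d m m) (vsub d j x) (vsub d j x))
      = (\<Sum>a\<in>Zdn d. ?F (vsub d k x) a)" for x
  proof -
    have "vadd d (vadd d (vsub d k x) a) x = vadd d k a"
      and "vsub d j x = vadd d (vsub d k x) (vsub d j k)" for a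
      by (rule ext, simp add: vadd_def vsub_def mod_simps)+
    then show ?thesis
      using sum_Zdn_shift[OF d, of "\<lambda>m. \<rho> (vadd d m x) (vadd d m x) *
        M (vsub d k x) (ketbra d m m) (vsub d j x) (vsub d j x)" "vsub d k x"]
      by simp
  qed
  then have "(\<Sum>x\<in>Zdn d. \<Sum>m\<in>Zdn d.
        \<rho> (vadd d m x) (vadd d m x) * M (vsub d k x) (ketbra d m m) (vsub d j x) (vsub d j x))
      = (\<Sum>k'\<in>Zdn d. \<Sum>a\<in>Zdn d. ?F k' a)"
    using sum_Zdn_reflect[OF d, of "\<lambda>k'. \<Sum>a\<in>Zdn d. ?F k' a" k] by simp
  also have "\<dots> = (\<Sum>a\<in>Zdn d. \<Sum>k'\<in>Zdn d. ?F k' a)"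
    by (rule sum.swap)
  finally show ?thesis
    by (simp add: avg_transition_def sum_distrib_left sum_distrib_right mult_ac)
qed

lemma compiled_eq_avg_transition:
  fixes M :: "('n::finite) lbl \<Rightarrow> 'n op \<Rightarrow> 'n op"
  assumes d: "d \<ge> 1" and M: "quantum_instrument d M"
  shows "compiled d M k \<rho> = (\<lambda>j l. \<Sum>a\<in>Zdn d. \<Sum>b\<in>Zdn d.
    avg_transition d M a b * \<rho> (vadd d k a) (vadd d k a) * ketbra d (vadd d k b) (vadd d k b) j l)"
proof (intro ext)
  fix j l
  have "compiled d M k \<rho> j l = (\<Sum>b\<in>Zdn d.
      (\<Sum>a\<in>Zdn d. avg_transition d M a b * \<rho> (vadd d k a) (vadd d k a)) * ketbra d (vadd d k b) (vadd d k b) j l)"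
    unfolding compiled_apply[OF d M] compiled_diag_eq_avg_transition[OF d]
    by (simp add: sum_ketbra_vadd[OF d])
  also have "\<dots> = (\<Sum>a\<in>Zdn d. \<Sum>b\<in>Zdn d.
      avg_transition d M a b * \<rho> (vadd d k a) (vadd d k a) * ketbra d (vadd d k b) (vadd d k b) j l)"
    by (subst sum.swap) (simp add: sum_distrib_right)
  finally show "compiled d M k \<rho> j l = \<dots>" .
qed

subsection \<open>Fourier transforms of the transition matrix\<close>

lemma tr_adj_Zop_linear_map_Zop:
  assumes lin: "linear_map d N"
  shows "tr d (mmul d (adj (Zop d t)) (N (Zop d s))) =
    (\<Sum>b\<in>Zdn d. \<Sum>m\<in>Zdn d. cnj (chi d t b) * chi d s m * N (ketbra d m m) b b)"
proof -
  have "N (Zop d s) = (\<lambda>j l. \<Sum>m\<in>Zdn d. chi d s m * N (ketbra d m m) j l)"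
    unfolding Zop_eq_sum_ketbra by (simp add: linear_map_sum[OF lin] is_op_ketbra)
  then show ?thesis
    by (simp add: tr_adj_Zop_mmul sum_distrib_left mult_ac)
qed

lemma chi_phase_cancel:
  "cnj (chi d k (vsub d s t)) * cnj (chi d t (vadd d k b)) * chi d s (vadd d k a)
     = chi d s a * cnj (chi d t b)"
proof -
  have "cnj (chi d k (vsub d s t)) * cnj (chi d t (vadd d k b)) * chi d s (vadd d k a)
     = chi d s a * cnj (chi d t b) * ((chi d s k * cnj (chi d s k)) * (chi d t k * cnj (chi d t k)))"
    by (simp add: chi_vsub chi_vadd chi_commute[of d k] mult_ac)
  then show ?thesis by (simp only: chi_mult_cnj_self mult_1_right)
qed

lemma fidelity_summand_eq:
  assumes d: "d \<ge> 1" and lin: "linear_map d N"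
  shows "cnj (chi d k (vsub d s t)) * tr d (mmul d (adj (Zop d t)) (N (Zop d s))) =
    (\<Sum>a\<in>Zdn d. \<Sum>b\<in>Zdn d. chi d s a * cnj (chi d t b) *
       N (ketbra d (vadd d k a) (vadd d k a)) (vadd d k b) (vadd d k b))"
proof -
  let ?G = "\<lambda>b m. cnj (chi d k (vsub d s t)) * cnj (chi d t b) * chi d s m * N (ketbra d m m) b b"
  have "cnj (chi d k (vsub d s t)) * tr d (mmul d (adj (Zop d t)) (N (Zop d s)))
      = (\<Sum>b\<in>Zdn d. \<Sum>m\<in>Zdn d. ?G b m)"
    by (simp add: tr_adj_Zop_linear_map_Zop[OF lin] sum_distrib_left mult_ac)
  also have "\<dots> = (\<Sum>b\<in>Zdn d. \<Sum>a\<in>Zdn d. ?G b (vadd d k a))"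
    by (rule sum.cong[OF refl sum_Zdn_shift[OF d, symmetric]])
  also have "\<dots> = (\<Sum>b\<in>Zdn d. \<Sum>a\<in>Zdn d. ?G (vadd d k b) (vadd d k a))"
    by (rule sum_Zdn_shift[OF d, symmetric])
  also have "\<dots> = (\<Sum>a\<in>Zdn d. \<Sum>b\<in>Zdn d. ?G (vadd d k b) (vadd d k a))"
    by (rule sum.swap)
  finally show ?thesis
    by (simp add: chi_phase_cancel)
qed

lemma nu_tilde_eq_fourier:
  fixes M :: "('n::finite) lbl \<Rightarrow> 'n op \<Rightarrow> 'n op"
  assumes d: "d \<ge> 1" and M: "quantum_instrument d M"
  shows "nu_tilde d M s t = (\<Sum>a\<in>Zdn d. \<Sum>b\<in>Zdn d. chi d s a * cnj (chi d t b) * avg_transition d M a b)"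
proof -
  let ?H = "\<lambda>k a b. chi d s a * cnj (chi d t b) *
    M k (ketbra d (vadd d k a) (vadd d k a)) (vadd d k b) (vadd d k b)"
  have "nu_tilde d M s t = (1 / of_int d ^ card (UNIV :: 'n set)) *
      (\<Sum>k\<in>Zdn d. \<Sum>a\<in>Zdn d. \<Sum>b\<in>Zdn d. ?H k a b)"
    unfolding nu_tilde_def
    by (simp add: fidelity_summand_eq[OF d linear_map_instrument[OF M]] cong: sum.cong)
  also have "(\<Sum>k\<in>Zdn d. \<Sum>a\<in>Zdn d. \<Sum>b\<in>Zdn d. ?H k a b) = (\<Sum>a\<in>Zdn d. \<Sum>b\<in>Zdn d. \<Sum>k\<in>Zdn d. ?H k a b)"
    by (rule trans[OF sum.swap sum.cong[OF refl sum.swap]])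
  finally show ?thesis
    by (simp add: avg_transition_def sum_distrib_left mult_ac)
qed

lemma nu_eq_avg_transition:
  fixes M :: "('n::finite) lbl \<Rightarrow> 'n op \<Rightarrow> 'n op"
  assumes d: "d \<ge> 1" and M: "quantum_instrument d M" and a: "a \<in> Zdn d" and b: "b \<in> Zdn d"
  shows "nu d M a b = avg_transition d M a b"
proof -
  let ?D = "of_int d ^ card (UNIV :: 'n set) :: complex"
  have "(\<Sum>s\<in>Zdn d. \<Sum>t\<in>Zdn d. nu_tilde d M s t * cnj (chi d s a) * chi d t b)
     = (\<Sum>a'\<in>Zdn d. \<Sum>b'\<in>Zdn d. avg_transition d M a' b' *
         (\<Sum>s\<in>Zdn d. cnj (chi d s a) * chi d s a') * (\<Sum>t\<in>Zdn d. chi d t b * cnj (chi d t b')))"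
    unfolding nu_tilde_eq_fourier[OF d M]
    by (subst sum_sum_exchange[symmetric]) (simp add: mult_ac)
  also have "\<dots> = (\<Sum>a'\<in>Zdn d. \<Sum>b'\<in>Zdn d. avg_transition d M a' b' *
      (if a' = a then ?D else 0) * (if b = b' then ?D else 0))"
    using sum_chi_mult_cnj[OF d _ a] sum_chi_mult_cnj[OF d b]
    by (intro sum.cong refl) (simp add: mult.commute[of "cnj _"])
  also have "\<dots> = ?D * ?D * avg_transition d M a b"
    using a b by (simp add: if_distrib[of "\<lambda>x. _ * x"] if_distrib[of "\<lambda>x. x * _"] sum.delta sum.delta'
        cong: if_cong)
  finally show ?thesis
    using d by (simp add: nu_def power_mult mult.commute[of 2] power2_eq_square)
qed

lemma sum_chi_tr_adj_Zop:
  fixes \<rho> :: "('n::finite) op"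
  assumes d: "d \<ge> 1"
  shows "(\<Sum>s\<in>Zdn d. chi d s k * tr d (mmul d (adj (Zop d s)) \<rho>) * chi d s a)
     = of_int d ^ card (UNIV :: 'n set) * \<rho> (vadd d k a) (vadd d k a)"
proof -
  have "(\<Sum>s\<in>Zdn d. chi d s k * tr d (mmul d (adj (Zop d s)) \<rho>) * chi d s a)
     = (\<Sum>s\<in>Zdn d. \<Sum>m\<in>Zdn d. \<rho> m m * (chi d s (vadd d k a) * cnj (chi d s m)))"
    by (simp add: tr_adj_Zop_mmul chi_vadd sum_distrib_left sum_distrib_right mult_ac)
  also have "\<dots> = (\<Sum>m\<in>Zdn d. \<rho> m m * (\<Sum>s\<in>Zdn d. chi d s (vadd d k a) * cnj (chi d s m)))"
    by (subst sum.swap) (simp add: sum_distrib_left)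
  also have "\<dots> = (\<Sum>m\<in>Zdn d. \<rho> m m * (if vadd d k a = m then of_int d ^ card (UNIV :: 'n set) else 0))"
    using d by (intro sum.cong refl) (simp add: sum_chi_mult_cnj[OF d])
  finally show ?thesis
    using d by (simp add: if_distrib[of "\<lambda>x. _ * x"] sum.delta mult.commute cong: if_cong)
qed

lemma sum_chi_Zop:
  fixes j l :: "('n::finite) lbl"
  assumes d: "d \<ge> 1"
  shows "(\<Sum>t\<in>Zdn d. cnj (chi d t k) * Zop d t j l * cnj (chi d t b))
     = of_int d ^ card (UNIV :: 'n set) * ketbra d (vadd d k b) (vadd d k b) j l"
proof (cases "j \<in> Zdn d \<and> l = j")
  case True
  then have "(\<Sum>t\<in>Zdn d. cnj (chi d t k) * Zop d t j l * cnj (chi d t b))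
      = (\<Sum>t\<in>Zdn d. chi d t j * cnj (chi d t (vadd d k b)))"
    by (simp add: Zop_def chi_vadd mult_ac)
  with True show ?thesis
    using d by (simp add: sum_chi_mult_cnj[OF d] ketbra_def)
next
  case False
  then show ?thesis by (auto simp: Zop_def ketbra_def)
qed

lemma fourier_form_eq_avg_transition:
  fixes M :: "('n::finite) lbl \<Rightarrow> 'n op \<Rightarrow> 'n op"
  assumes d: "d \<ge> 1" and M: "quantum_instrument d M"
  shows "(1 / of_int d ^ (2 * card (UNIV :: 'n set))) *
      (\<Sum>s\<in>Zdn d. \<Sum>t\<in>Zdn d. chi d k (vsub d s t) * nu_tilde d M s t
        * tr d (mmul d (adj (Zop d s)) \<rho>) * Zop d t j l)
    = (\<Sum>a\<in>Zdn d. \<Sum>b\<in>Zdn d.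
        avg_transition d M a b * \<rho> (vadd d k a) (vadd d k a) * ketbra d (vadd d k b) (vadd d k b) j l)"
proof -
  let ?D = "of_int d ^ card (UNIV :: 'n set) :: complex"
  have "chi d k (vsub d s t) = chi d s k * cnj (chi d t k)" for s t
    using chi_vsub chi_commute by metis
  then have "(\<Sum>s\<in>Zdn d. \<Sum>t\<in>Zdn d. chi d k (vsub d s t) * nu_tilde d M s t
        * tr d (mmul d (adj (Zop d s)) \<rho>) * Zop d t j l)
     = (\<Sum>s\<in>Zdn d. \<Sum>t\<in>Zdn d. (chi d s k * tr d (mmul d (adj (Zop d s)) \<rho>)) * (cnj (chi d t k) * Zop d t j l) *
         (\<Sum>a\<in>Zdn d. \<Sum>b\<in>Zdn d. chi d s a * cnj (chi d t b) * avg_transition d M a b))"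
    by (simp add: nu_tilde_eq_fourier[OF d M] mult_ac)
  also have "\<dots> = (\<Sum>a\<in>Zdn d. \<Sum>b\<in>Zdn d. avg_transition d M a b *
        (\<Sum>s\<in>Zdn d. chi d s k * tr d (mmul d (adj (Zop d s)) \<rho>) * chi d s a) *
        (\<Sum>t\<in>Zdn d. cnj (chi d t k) * Zop d t j l * cnj (chi d t b)))"
    by (rule sum_sum_exchange)
  also have "\<dots> = ?D * ?D * (\<Sum>a\<in>Zdn d. \<Sum>b\<in>Zdn d.
        avg_transition d M a b * \<rho> (vadd d k a) (vadd d k a) * ketbra d (vadd d k b) (vadd d k b) j l)"
    unfolding sum_chi_tr_adj_Zop[OF d] sum_chi_Zop[OF d] by (simp add: sum_distrib_left mult_ac)
  finally show ?thesis
    using d by (simp add: power_mult mult.commute[of 2] power2_eq_square)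
qed

theorem theorem2:
  fixes d :: int and M :: "('n::finite) lbl \<Rightarrow> 'n op \<Rightarrow> 'n op"
    and k :: "'n lbl" and \<rho> :: "'n op"
  assumes "d \<ge> 1"
    and "quantum_instrument d M"
    and "k \<in> Zdn d"
    and "is_op d \<rho>"
  shows "compiled d M k \<rho> = (\<lambda>j l. (1 / of_int d ^ (2 * card (UNIV :: 'n set))) *
           (\<Sum>s\<in>Zdn d. \<Sum>t\<in>Zdn d. chi d k (vsub d s t) * nu_tilde d M s t
              * tr d (mmul d (adj (Zop d s)) \<rho>) * Zop d t j l)) \<and>
         compiled d M k \<rho> = (\<lambda>j l. \<Sum>a\<in>Zdn d. \<Sum>b\<in>Zdn d.
           nu d M a b * \<rho> (vadd d k a) (vadd d k a) * ketbra d (vadd d k b) (vadd d k b) j l)"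
  using compiled_eq_avg_transition[OF assms(1,2)] fourier_form_eq_avg_transition[OF assms(1,2)]
    nu_eq_avg_transition[OF assms(1,2)]
  by (simp cong: sum.cong)

end
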